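(* Let $n\ge 1$, let $B=(B_{ij})$ be a symmetric $n\times n$ matrix over $\mathbb{F}_2$ with zero diagonal, and let $f(x)=\sum_{i<j}B_{ij}x_ix_j$ be the associated boolean function on $\mathbb{Z}_2^n$. Let $\mathcal{C}_B\subseteq\mathbb{F}_2^{2n}$ be the code spanned over $\mathbb{F}_2$ by the rows of the $n\times 2n$ matrix $(B\mid I_n)$. Then the EPC distance of $f$ equals the binary distance $d_b$ of $\mathcal{C}_B$.
   Context: For $x\in\mathbb{Z}_2^n$, $w(x)$ is the Hamming weight. For $x,y\in\mathbb{Z}_2^n$, $x\preceq y$ means $x_j\le y_j$ for all $j$; $\bar a$ is the complement of $a$ ($\bar a_j=a_j+1\bmod 2$); $V_a=\{x: x\preceq a\}$ and, for $k\preceq\mu$, $k+V_{\bar\mu}=\{k+x: x\preceq\bar\mu\}$. Exponents of $(-1)$ are computed mod 2. Binary weight and binary distance: a vector $(\alpha,\beta)\in\mathbb{F}_2^{2n}$ (with $\alpha,\beta\in\mathbb{F}_2^n$) is viewed as a length-$n$ word whose $j$-th letter is the pair $(\alpha_j,\beta_j)$; its binary weight is $w_b(\alpha,\beta)=w_x+2w_y+w_z$, where $w_x,w_y,w_z$ count the indices $j$ with $(\alpha_j,\beta_j)=(1,0)$, $(1,1)$, $(0,1)$ respectively; equivalently $w_b(\alpha,\beta)=w(\alpha)+w(\beta)$. The binary distance $d_b$ of a code is the minimum binary weight of its nonzero codewords. EPC distance: for a boolean function $f$ and $a,k,\mu\in\mathbb{Z}_2^n$ with $k\preceq\mu$, the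 fixed-extended autocorrelation is $v(a,k,\mu)=\sum_{x\in k+V_{\bar\mu}}(-1)^{f(x)+f(x+a)}$. For integers $l\ge1$, $q\ge0$, $f$ satisfies EPC($l$) of order $q$ if $v(a,k,\mu)=0$ for all $a,k,\mu$ with $k\preceq\mu$, $1\le w(a)\le l$ and $0\le w(\mu)\le q$. The EPC distance of $f$ is the largest integer $d\ge1$ such that $f$ satisfies EPC($l$) of order $q$ for all $l\ge1,q\ge0$ with $l+q<d$ (equivalently, the minimum of $w(a)+w(\mu)$ over all $a\neq0$, $k\preceq\mu$ with $v(a,k,\mu)\neq0$). *)

theory Defs
  imports Main
begin

text \<open>Vectors of Z_2^n are represented as functions nat => bool that vanish
  outside the index range {0..<n} (True = 1, False = 0).\<close>

definition vecs :: "nat \<Rightarrow> (nat \<Rightarrow> bool) set" where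
  "vecs n = {x. \<forall>j. n \<le> j \<longrightarrow> \<not> x j}"

definition vadd :: "(nat \<Rightarrow> bool) \<Rightarrow> (nat \<Rightarrow> bool) \<Rightarrow> nat \<Rightarrow> bool" where
  "vadd x y = (\<lambda>j. x j \<noteq> y j)"

definition hweight :: "nat \<Rightarrow> (nat \<Rightarrow> bool) \<Rightarrow> nat" where
  "hweight n x = card {j. j < n \<and> x j}"

definition vpreceq :: "nat \<Rightarrow> (nat \<Rightarrow> bool) \<Rightarrow> (nat \<Rightarrow> bool) \<Rightarrow> bool" where
  "vpreceq n x y = (\<forall>j<n. x j \<longrightarrow> y j)"

definition vcompl :: "nat \<Rightarrow> (nat \<Rightarrow> bool) \<Rightarrow> nat \<Rightarrow> bool" where
  "vcompl n a = (\<lambda>j. j < n \<and> \<not> a j)"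

definition Vset :: "nat \<Rightarrow> (nat \<Rightarrow> bool) \<Rightarrow> (nat \<Rightarrow> bool) set" where
  "Vset n a = {x \<in> vecs n. vpreceq n x a}"

definition assoc_fun :: "nat \<Rightarrow> (nat \<Rightarrow> nat \<Rightarrow> bool) \<Rightarrow> (nat \<Rightarrow> bool) \<Rightarrow> bool" where
  "assoc_fun n B x = odd (card {(i, j). i < j \<and> j < n \<and> B i j \<and> x i \<and> x j})"

definition sgn1 :: "bool \<Rightarrow> int" where
  "sgn1 b = (if b then -1 else 1)"

definition fe_autocorr ::
  "nat \<Rightarrow> ((nat \<Rightarrow> bool) \<Rightarrow> bool) \<Rightarrow> (nat \<Rightarrow> bool) \<Rightarrow> (nat \<Rightarrow> bool) \<Rightarrow> (nat \<Rightarrow> bool) \<Rightarrow> int" where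
  "fe_autocorr n f a k \<mu> =
     (\<Sum>x \<in> (vadd k) ` Vset n (vcompl n \<mu>). sgn1 (f x \<noteq> f (vadd x a)))"

definition EPC :: "nat \<Rightarrow> ((nat \<Rightarrow> bool) \<Rightarrow> bool) \<Rightarrow> nat \<Rightarrow> nat \<Rightarrow> bool" where
  "EPC n f l q = (\<forall>a \<in> vecs n. \<forall>k \<in> vecs n. \<forall>\<mu> \<in> vecs n.
      vpreceq n k \<mu> \<and> 1 \<le> hweight n a \<and> hweight n a \<le> l \<and> hweight n \<mu> \<le> q
      \<longrightarrow> fe_autocorr n f a k \<mu> = 0)"

definition EPC_distance :: "nat \<Rightarrow> ((nat \<Rightarrow> bool) \<Rightarrow> bool) \<Rightarrow> nat" where
  "EPC_distance n f = (GREATEST d. 1 \<le> d \<and> (\<forall>l q. 1 \<le> l \<and> l + q < d \<longrightarrow> EPC n f l q))"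

definition f2sum :: "nat set \<Rightarrow> (nat \<Rightarrow> nat \<Rightarrow> bool) \<Rightarrow> nat \<Rightarrow> bool" where
  "f2sum S v = (\<lambda>j. odd (card {i \<in> S. v i j}))"

text \<open>The code C_B in F_2^{2n}, a vector written as a pair (alpha, beta):
  the F_2-span of the rows (B_i | e_i), i < n, of the matrix (B | I_n).\<close>
definition code_B :: "nat \<Rightarrow> (nat \<Rightarrow> nat \<Rightarrow> bool) \<Rightarrow> ((nat \<Rightarrow> bool) \<times> (nat \<Rightarrow> bool)) set" where
  "code_B n B = {(f2sum S (\<lambda>i j. j < n \<and> B i j), f2sum S (\<lambda>i j. j = i)) | S. S \<subseteq> {..<n}}"

definition bin_weight :: "nat \<Rightarrow> (nat \<Rightarrow> bool) \<times> (nat \<Rightarrow> bool) \<Rightarrow> nat" where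
  "bin_weight n c = hweight n (fst c) + hweight n (snd c)"

definition bin_distance :: "nat \<Rightarrow> ((nat \<Rightarrow> bool) \<times> (nat \<Rightarrow> bool)) set \<Rightarrow> nat" where
  "bin_distance n C = Min (bin_weight n ` {c \<in> C. c \<noteq> (\<lambda>_. False, \<lambda>_. False)})"

end

theory Submission imports Defs "HOL-Library.Z2" begin

text \<open>Over \<open>\<F>\<^sub>2\<close> the quadratic form polarises as \<open>f(x + a) = f(x) + f(a) + x \<cdot> aB\<close>,
  since \<open>B\<close> is symmetric with zero diagonal. Writing \<open>x = k + y\<close> with \<open>y\<close> in the subcube of the
  coordinates outside \<open>\<mu>\<close>, the autocorrelation \<open>v(a, k, \<mu>)\<close> is therefore, up to sign, the
  character sum of \<open>y \<mapsto> (-1)\<^bsup>y \<cdot> aB\<^esup>\<close> over that subcube, which is nonzero exactly when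
  \<open>aB \<preceq> \<mu>\<close>. So the least \<open>w(a) + w(\<mu>)\<close> with \<open>v(a, k, \<mu>) \<noteq> 0\<close> is the least \<open>w(a) + w(aB)\<close>
  over \<open>a \<noteq> 0\<close>, which is the least binary weight of a nonzero codeword \<open>(aB, a)\<close> of \<open>C\<^sub>B\<close>.\<close>

section \<open>Polarisation of the quadratic form\<close>

declare add_bit_eq_xor [simp del] mult_bit_eq_and [simp del]
  sum_of_bool_eq [simp del] sum_mult_of_bool_eq [simp del] sum_of_bool_mult_eq [simp del]

lemma of_nat_bit_eq_of_bool_odd: "(of_nat m :: bit) = of_bool (odd m)"
  by (induction m) auto

lemma of_bool_odd_card_filter:
  assumes "finite A"
  shows "(of_bool (odd (card {p \<in> A. P p})) :: bit) = (\<Sum>p\<in>A. of_bool (P p))"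
proof -
  have "(\<Sum>p\<in>A. of_bool (P p)) = (of_nat (card (A \<inter> {p. P p})) :: bit)"
    by (rule sum_of_bool_eq[OF assms assms])
  also have "A \<inter> {p. P p} = {p \<in> A. P p}" by blast
  finally show ?thesis
    by (simp only: of_nat_bit_eq_of_bool_odd)
qed

lemma of_bool_neq_bit: "(of_bool (p \<noteq> q) :: bit) = of_bool p + of_bool q"
  by (cases p; cases q) auto

lemma bit_add_self: "(b :: bit) + b = 0"
  by (metis bit_2_eq_0 mult_2 mult_zero_left)

lemma sum_triangle_polarize:
  fixes \<beta> :: "nat \<Rightarrow> nat \<Rightarrow> 'a::comm_semiring_1"
  assumes "\<forall>i<n. \<forall>j<n. \<beta> i j = \<beta> j i" and "\<forall>i<n. \<beta> i i = 0"
  shows "(\<Sum>j<n. \<Sum>i<j. \<beta> i j * (x i + a i) * (x j + a j)) =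
    (\<Sum>j<n. \<Sum>i<j. \<beta> i j * x i * x j) + (\<Sum>j<n. \<Sum>i<j. \<beta> i j * a i * a j)
    + (\<Sum>i<n. \<Sum>j<n. \<beta> i j * a i * x j)"
  using assms
proof (induction n)
  case (Suc n)
  have sym: "\<beta> n j = \<beta> j n" if "j < n" for j
    using Suc.prems(1) that by simp
  have "(\<Sum>i<Suc n. \<Sum>j<Suc n. \<beta> i j * a i * x j) = (\<Sum>i<n. \<Sum>j<n. \<beta> i j * a i * x j)
      + (\<Sum>i<n. \<beta> i n * a i * x n) + (\<Sum>i<n. \<beta> i n * x i * a n)"
    using Suc.prems(2) by (simp add: sum.distrib sym algebra_simps)
  then show ?case
    using Suc by (simp add: sum.distrib algebra_simps)
qed simp

definition vec_mat :: "nat \<Rightarrow> (nat \<Rightarrow> nat \<Rightarrow> bool) \<Rightarrow> (nat \<Rightarrow> bool) \<Rightarrow> nat \<Rightarrow> bool" where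
  "vec_mat n B a = f2sum {i. i < n \<and> a i} (\<lambda>i j. j < n \<and> B i j)"

definition dotp :: "nat \<Rightarrow> (nat \<Rightarrow> bool) \<Rightarrow> (nat \<Rightarrow> bool) \<Rightarrow> bool" where
  "dotp n x y = odd (card {j. j < n \<and> x j \<and> y j})"

lemma vec_mat_in_vecs: "vec_mat n B a \<in> vecs n"
  unfolding vecs_def vec_mat_def f2sum_def by auto

lemma vec_mat_zero: "vec_mat n B (\<lambda>_. False) = (\<lambda>_. False)"
  unfolding vec_mat_def f2sum_def by simp

lemma of_bool_dotp: "(of_bool (dotp n x y) :: bit) = (\<Sum>j<n. of_bool (x j) * of_bool (y j))"
proof -
  have "{j. j < n \<and> x j \<and> y j} = {j \<in> {..<n}. x j \<and> y j}" by auto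
  then show ?thesis
    unfolding dotp_def by (simp only: of_bool_odd_card_filter finite_lessThan of_bool_conj)
qed

lemma of_bool_vec_mat:
  assumes "j < n"
  shows "(of_bool (vec_mat n B a j) :: bit) = (\<Sum>i<n. of_bool (a i) * of_bool (B i j))"
proof -
  have "{i \<in> {i. i < n \<and> a i}. j < n \<and> B i j} = {i \<in> {..<n}. a i \<and> B i j}"
    using assms by auto
  then show ?thesis
    unfolding vec_mat_def f2sum_def by (simp only: of_bool_odd_card_filter finite_lessThan of_bool_conj)
qed

lemma of_bool_assoc_fun:
  "(of_bool (assoc_fun n B x) :: bit) =
     (\<Sum>j<n. \<Sum>i<j. of_bool (B i j) * of_bool (x i) * of_bool (x j))"
proof -
  let ?T = "SIGMA j:{..<n}. {..<j}"
  have "{(i, j). i < j \<and> j < n \<and> B i j \<and> x i \<and> x j} =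
      {p \<in> prod.swap ` ?T. case p of (i, j) \<Rightarrow> B i j \<and> x i \<and> x j}"
    by auto
  then have "(of_bool (assoc_fun n B x) :: bit) =
      (\<Sum>p\<in>prod.swap ` ?T. of_bool (case p of (i, j) \<Rightarrow> B i j \<and> x i \<and> x j))"
    unfolding assoc_fun_def by (simp add: of_bool_odd_card_filter)
  also have "\<dots> = (\<Sum>(j, i)\<in>?T. of_bool (B i j \<and> x i \<and> x j))"
    by (simp add: sum.reindex split_def)
  finally show ?thesis
    by (simp add: sum.Sigma of_bool_conj mult.assoc)
qed

lemma of_bool_assoc_fun_vadd:
  assumes "\<forall>i<n. \<forall>j<n. B i j = B j i" and "\<forall>i<n. \<not> B i i"
  shows "(of_bool (assoc_fun n B (vadd x a)) :: bit) =
    of_bool (assoc_fun n B x) + of_bool (assoc_fun n B a) + of_bool (dotp n x (vec_mat n B a))"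
proof -
  define \<beta> where "\<beta> i j = (of_bool (B i j) :: bit)" for i j
  define X where "X i = (of_bool (x i) :: bit)" for i
  define A where "A i = (of_bool (a i) :: bit)" for i
  have "(of_bool (dotp n x (vec_mat n B a)) :: bit) = (\<Sum>j<n. \<Sum>i<n. X j * (A i * \<beta> i j))"
    by (simp add: of_bool_dotp of_bool_vec_mat sum_distrib_left X_def A_def \<beta>_def)
  also have "\<dots> = (\<Sum>i<n. \<Sum>j<n. \<beta> i j * A i * X j)"
    by (subst sum.swap) (simp add: mult_ac)
  finally have cross: "(of_bool (dotp n x (vec_mat n B a)) :: bit) = \<dots>" .
  show ?thesis
    unfolding of_bool_assoc_fun cross vadd_def of_bool_neq_bit
    using sum_triangle_polarize[of n \<beta> X A] assms
    by (simp add: \<beta>_def X_def A_def)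
qed

lemma assoc_fun_vadd:
  assumes "\<forall>i<n. \<forall>j<n. B i j = B j i" and "\<forall>i<n. \<not> B i i"
  shows "(assoc_fun n B x \<noteq> assoc_fun n B (vadd x a)) =
    (assoc_fun n B a \<noteq> dotp n x (vec_mat n B a))"
proof -
  have "(of_bool (assoc_fun n B x \<noteq> assoc_fun n B (vadd x a)) :: bit) =
      of_bool (assoc_fun n B x) + of_bool (assoc_fun n B x)
      + (of_bool (assoc_fun n B a) + of_bool (dotp n x (vec_mat n B a)))"
    unfolding of_bool_neq_bit of_bool_assoc_fun_vadd[OF assms] by (simp only: add.assoc)
  then show ?thesis
    by (simp only: bit_add_self add_0 of_bool_neq_bit[symmetric] of_bool_eq_iff)
qed

lemma dotp_vadd: "dotp n (vadd k y) c = (dotp n k c \<noteq> dotp n y c)"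
proof -
  have "(of_bool (dotp n (vadd k y) c) :: bit) = of_bool (dotp n k c) + of_bool (dotp n y c)"
    unfolding of_bool_dotp vadd_def of_bool_neq_bit by (simp add: sum.distrib distrib_right)
  then show ?thesis
    by (simp only: of_bool_neq_bit[symmetric] of_bool_eq_iff)
qed

lemma vadd_vadd_cancel: "vadd (vadd x y) y = x"
  unfolding vadd_def by auto

lemma vadd_left_cancel: "vadd x (vadd x y) = y"
  unfolding vadd_def by auto

section \<open>Character sums over subcubes\<close>

lemma vecs_eq_image: "vecs n = (\<lambda>S j. j \<in> S) ` Pow {..<n}"
proof (intro equalityI subsetI)
  fix x assume "x \<in> vecs n"
  then have "x = (\<lambda>j. j \<in> {j. j < n \<and> x j})"
    unfolding vecs_def by (auto intro!: ext) (meson not_le)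
  then show "x \<in> (\<lambda>S j. j \<in> S) ` Pow {..<n}" by blast
qed (auto simp: vecs_def)

lemma zero_in_vecs: "(\<lambda>_. False) \<in> vecs n"
  by (simp add: vecs_def)

lemma finite_vecs: "finite (vecs n)"
  by (simp add: vecs_eq_image)

lemma finite_Vset: "finite (Vset n m)"
  unfolding Vset_def using finite_vecs by simp

lemma sgn1_neq: "sgn1 (p \<noteq> q) = sgn1 p * sgn1 q"
  unfolding sgn1_def by auto

text \<open>Translation by the unit vector \<open>e\<^sub>j\<close> is an involution of \<open>V\<^sub>m\<close> that flips
  every sign when \<open>c\<^sub>j = 1\<close>.\<close>
lemma sum_sgn1_dotp_Vset_eq_0:
  assumes "j < n" "m j" "c j"
  shows "(\<Sum>y\<in>Vset n m. sgn1 (dotp n y c)) = 0"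
proof -
  define e where "e = (\<lambda>l. l = j)"
  have "{l. l < n \<and> e l \<and> c l} = {j}"
    using assms unfolding e_def by auto
  then have dotp_e: "dotp n e c"
    unfolding dotp_def by simp
  have mem: "vadd y e \<in> Vset n m" if "y \<in> Vset n m" for y
    using that assms unfolding Vset_def vecs_def vpreceq_def vadd_def e_def by auto
  have "(\<Sum>y\<in>Vset n m. sgn1 (dotp n y c)) = (\<Sum>y\<in>Vset n m. - sgn1 (dotp n y c))"
    by (rule sum.reindex_bij_witness[where i = "\<lambda>y. vadd y e" and j = "\<lambda>y. vadd y e"])
      (auto simp: mem vadd_vadd_cancel dotp_vadd dotp_e sgn1_def)
  then show ?thesis
    by (simp add: sum_negf)
qed

lemma sum_sgn1_dotp_Vset_neq_0:
  assumes "\<forall>j<n. m j \<longrightarrow> \<not> c j"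
  shows "(\<Sum>y\<in>Vset n m. sgn1 (dotp n y c)) \<noteq> 0"
proof -
  have "sgn1 (dotp n y c) = 1" if "y \<in> Vset n m" for y
  proof -
    have "{j. j < n \<and> y j \<and> c j} = {}"
      using that assms unfolding Vset_def vpreceq_def by auto
    then show ?thesis
      unfolding dotp_def sgn1_def by (simp only: card.empty) simp
  qed
  then have "(\<Sum>y\<in>Vset n m. sgn1 (dotp n y c)) = int (card (Vset n m))"
    by simp
  moreover have "(\<lambda>_. False) \<in> Vset n m"
    unfolding Vset_def vecs_def vpreceq_def by simp
  ultimately show ?thesis
    using finite_Vset[of n m] by (auto simp: card_eq_0_iff)
qed

section \<open>The autocorrelation of the quadratic form\<close>

lemma fe_autocorr_assoc_fun:
  assumes "\<forall>i<n. \<forall>j<n. B i j = B j i" and "\<forall>i<n. \<not> B i i"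
  shows "fe_autocorr n (assoc_fun n B) a k \<mu> =
    sgn1 (assoc_fun n B a \<noteq> dotp n k (vec_mat n B a))
    * (\<Sum>y\<in>Vset n (vcompl n \<mu>). sgn1 (dotp n y (vec_mat n B a)))"
proof -
  let ?f = "assoc_fun n B" and ?c = "vec_mat n B a"
  have "inj (vadd k)"
    by (metis injI vadd_left_cancel)
  then have "fe_autocorr n ?f a k \<mu> =
      (\<Sum>y\<in>Vset n (vcompl n \<mu>). sgn1 (?f (vadd k y) \<noteq> ?f (vadd (vadd k y) a)))"
    unfolding fe_autocorr_def by (simp add: sum.reindex inj_on_subset)
  also have "\<dots> = (\<Sum>y\<in>Vset n (vcompl n \<mu>). sgn1 (?f a \<noteq> dotp n k ?c) * sgn1 (dotp n y ?c))"
  proof (rule sum.cong[OF refl])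
    fix y
    have "(?f (vadd k y) \<noteq> ?f (vadd (vadd k y) a)) = ((?f a \<noteq> dotp n k ?c) \<noteq> dotp n y ?c)"
      using assoc_fun_vadd[OF assms, of "vadd k y" a] dotp_vadd[of n k y ?c] by auto
    then show "sgn1 (?f (vadd k y) \<noteq> ?f (vadd (vadd k y) a)) =
        sgn1 (?f a \<noteq> dotp n k ?c) * sgn1 (dotp n y ?c)"
      by (simp only: sgn1_neq)
  qed
  finally show ?thesis
    by (simp add: sum_distrib_left)
qed

lemma fe_autocorr_assoc_fun_neq_0_iff:
  assumes "\<forall>i<n. \<forall>j<n. B i j = B j i" and "\<forall>i<n. \<not> B i i"
  shows "fe_autocorr n (assoc_fun n B) a k \<mu> \<noteq> 0 \<longleftrightarrow> vpreceq n (vec_mat n B a) \<mu>"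
proof
  assume "fe_autocorr n (assoc_fun n B) a k \<mu> \<noteq> 0"
  then have nz: "(\<Sum>y\<in>Vset n (vcompl n \<mu>). sgn1 (dotp n y (vec_mat n B a))) \<noteq> 0"
    by (auto simp: fe_autocorr_assoc_fun[OF assms])
  show "vpreceq n (vec_mat n B a) \<mu>"
    unfolding vpreceq_def
  proof (intro allI impI)
    fix j assume "j < n" "vec_mat n B a j"
    then show "\<mu> j"
      using nz sum_sgn1_dotp_Vset_eq_0[of j n "vcompl n \<mu>"] by (auto simp: vcompl_def)
  qed
next
  assume "vpreceq n (vec_mat n B a) \<mu>"
  then have "(\<Sum>y\<in>Vset n (vcompl n \<mu>). sgn1 (dotp n y (vec_mat n B a))) \<noteq> 0"
    by (intro sum_sgn1_dotp_Vset_neq_0) (auto simp: vcompl_def vpreceq_def)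
  then show "fe_autocorr n (assoc_fun n B) a k \<mu> \<noteq> 0"
    by (simp add: fe_autocorr_assoc_fun[OF assms] sgn1_def)
qed

section \<open>Weights and the code\<close>

lemma hweight_ge_1_iff:
  assumes "a \<in> vecs n"
  shows "1 \<le> hweight n a \<longleftrightarrow> a \<noteq> (\<lambda>_. False)"
proof -
  have "1 \<le> hweight n a \<longleftrightarrow> {j. j < n \<and> a j} \<noteq> {}"
    unfolding hweight_def by (simp add: Suc_le_eq card_gt_0_iff)
  also have "\<dots> \<longleftrightarrow> a \<noteq> (\<lambda>_. False)"
    using assms unfolding vecs_def by (auto simp: fun_eq_iff) (meson not_le)
  finally show ?thesis .
qed

lemma hweight_mono: "vpreceq n c \<mu> \<Longrightarrow> hweight n c \<le> hweight n \<mu>"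
  unfolding hweight_def vpreceq_def by (rule card_mono) auto

lemma f2sum_unit_vectors: "f2sum S (\<lambda>i j. j = i) = (\<lambda>j. j \<in> S)"
proof
  fix j
  have "{i \<in> S. j = i} = (if j \<in> S then {j} else {})" by auto
  then show "f2sum S (\<lambda>i j. j = i) j = (j \<in> S)"
    unfolding f2sum_def by simp
qed

lemma code_B_eq_image: "code_B n B = (\<lambda>a. (vec_mat n B a, a)) ` vecs n"
proof -
  have "vec_mat n B (\<lambda>j. j \<in> S) = f2sum S (\<lambda>i j. j < n \<and> B i j)" if "S \<subseteq> {..<n}" for S
  proof -
    have "{i. i < n \<and> i \<in> S} = S" using that by auto
    then show ?thesis unfolding vec_mat_def by simp
  qed
  then have "(\<lambda>a. (vec_mat n B a, a)) ` vecs n =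
      (\<lambda>S. (f2sum S (\<lambda>i j. j < n \<and> B i j), \<lambda>j. j \<in> S)) ` Pow {..<n}"
    unfolding vecs_eq_image image_image by (intro image_cong) auto
  then show ?thesis
    unfolding code_B_def f2sum_unit_vectors by auto
qed

lemma bin_distance_code_B:
  "bin_distance n (code_B n B) =
    Min ((\<lambda>a. hweight n a + hweight n (vec_mat n B a)) ` {a \<in> vecs n. a \<noteq> (\<lambda>_. False)})"
proof -
  have "(vec_mat n B a, a) \<noteq> (\<lambda>_. False, \<lambda>_. False) \<longleftrightarrow> a \<noteq> (\<lambda>_. False)" for a
    by (cases "a = (\<lambda>_. False)") (simp_all add: vec_mat_zero)
  then have "{c \<in> code_B n B. c \<noteq> (\<lambda>_. False, \<lambda>_. False)} =
      (\<lambda>a. (vec_mat n B a, a)) ` {a \<in> vecs n. a \<noteq> (\<lambda>_. False)}"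
    unfolding code_B_eq_image by (simp only: Compr_image_eq)
  then have "bin_weight n ` {c \<in> code_B n B. c \<noteq> (\<lambda>_. False, \<lambda>_. False)} =
      (\<lambda>a. hweight n a + hweight n (vec_mat n B a)) ` {a \<in> vecs n. a \<noteq> (\<lambda>_. False)}"
    by (simp add: image_image bin_weight_def add.commute)
  then show ?thesis
    unfolding bin_distance_def by (rule arg_cong)
qed

section \<open>The EPC distance\<close>

lemma EPC_distance_eqI:
  assumes lower: "\<And>a k \<mu>. a \<in> vecs n \<Longrightarrow> k \<in> vecs n \<Longrightarrow> \<mu> \<in> vecs n \<Longrightarrow> vpreceq n k \<mu> \<Longrightarrow>
      1 \<le> hweight n a \<Longrightarrow> fe_autocorr n f a k \<mu> \<noteq> 0 \<Longrightarrow> d \<le> hweight n a + hweight n \<mu>"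
    and attained: "a \<in> vecs n" "k \<in> vecs n" "\<mu> \<in> vecs n" "vpreceq n k \<mu>" "1 \<le> hweight n a"
      "fe_autocorr n f a k \<mu> \<noteq> 0" "hweight n a + hweight n \<mu> = d"
  shows "EPC_distance n f = d"
  unfolding EPC_distance_def
proof (rule Greatest_equality)
  have "EPC n f l q" if "1 \<le> l" "l + q < d" for l q
    unfolding EPC_def
  proof (intro ballI impI)
    fix a k \<mu>
    assume "a \<in> vecs n" "k \<in> vecs n" "\<mu> \<in> vecs n"
      and "vpreceq n k \<mu> \<and> 1 \<le> hweight n a \<and> hweight n a \<le> l \<and> hweight n \<mu> \<le> q"
    then show "fe_autocorr n f a k \<mu> = 0"
      using lower[of a k \<mu>] that by fastforce
  qed
  then show "1 \<le> d \<and> (\<forall>l q. 1 \<le> l \<and> l + q < d \<longrightarrow> EPC n f l q)"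
    using attained by auto
next
  fix d' assume d': "1 \<le> d' \<and> (\<forall>l q. 1 \<le> l \<and> l + q < d' \<longrightarrow> EPC n f l q)"
  show "d' \<le> d"
  proof (rule ccontr)
    assume "\<not> d' \<le> d"
    then have "EPC n f (hweight n a) (hweight n \<mu>)"
      using d' attained by simp
    then show False
      unfolding EPC_def using attained by auto
  qed
qed

lemma EPC_distance_assoc_fun:
  assumes "1 \<le> n"
    and "\<forall>i<n. \<forall>j<n. B i j = B j i" and "\<forall>i<n. \<not> B i i"
  shows "EPC_distance n (assoc_fun n B) =
    Min ((\<lambda>a. hweight n a + hweight n (vec_mat n B a)) ` {a \<in> vecs n. a \<noteq> (\<lambda>_. False)})"
proof -
  note autocorr_iff = fe_autocorr_assoc_fun_neq_0_iff[OF assms(2,3)]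
  define W where "W = {a \<in> vecs n. a \<noteq> (\<lambda>_. False)}"
  define wt where "wt a = hweight n a + hweight n (vec_mat n B a)" for a
  have finite: "finite (wt ` W)"
    using finite_vecs unfolding W_def by simp
  have "(\<lambda>i. i = 0) \<in> W"
    using assms(1) unfolding W_def vecs_def by (auto simp: fun_eq_iff)
  then have "Min (wt ` W) \<in> wt ` W"
    using finite by (intro Min_in) auto
  then obtain a0 where a0: "a0 \<in> W" "Min (wt ` W) = wt a0"
    by blast
  then have a0_vecs: "a0 \<in> vecs n" and a0_weight: "1 \<le> hweight n a0"
    using hweight_ge_1_iff unfolding W_def by auto
  have "EPC_distance n (assoc_fun n B) = wt a0"
  proof (rule EPC_distance_eqI[where a = a0 and k = "\<lambda>_. False" and \<mu> = "vec_mat n B a0"])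
    fix a k \<mu>
    assume a: "a \<in> vecs n" "1 \<le> hweight n a" "fe_autocorr n (assoc_fun n B) a k \<mu> \<noteq> 0"
    then have "wt a0 \<le> wt a"
      using hweight_ge_1_iff a0(2)[symmetric] finite unfolding W_def by simp
    moreover have "hweight n (vec_mat n B a) \<le> hweight n \<mu>"
      using a autocorr_iff hweight_mono by blast
    ultimately show "wt a0 \<le> hweight n a + hweight n \<mu>"
      unfolding wt_def by linarith
  qed (use a0_vecs a0_weight in \<open>simp_all add: zero_in_vecs vec_mat_in_vecs autocorr_iff wt_def vpreceq_def\<close>)
  then show ?thesis
    using a0(2) unfolding W_def wt_def by simp
qed

theorem theorem4p1:
  fixes n :: nat and B :: "nat \<Rightarrow> nat \<Rightarrow> bool"
  assumes "1 \<le> n"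
    and "\<forall>i<n. \<forall>j<n. B i j = B j i"
    and "\<forall>i<n. \<not> B i i"
  shows "EPC_distance n (assoc_fun n B) = bin_distance n (code_B n B)"
  using EPC_distance_assoc_fun[OF assms] by (simp only: bin_distance_code_B)

end
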